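(* Let $(V,\langle\cdot,\cdot\rangle)$ be a pseudo-Euclidean real vector space of signature $(k,l)$ with $k\ge2$, $l\ge2$, let $Z\subseteq V$ be a subspace with $q^+(Z)\ge1$, and let $H\subseteq V$ be a positive $(k-1)$-plane. Then $H^\perp$ is a Minkowski space of signature $(1,l)$; let $C^+(H^\perp)$ be either one of the two connected components of $\{w\in H^\perp:\langle w,w\rangle\ge0\}\setminus\{0\}$. The following are equivalent: (i) $H$ is $Z$-extendable; (ii) $q^+(H+Z)=k$; (iii) $q^+((H+Z)\cap H^\perp)\ge1$; (iv) there exists $z\in Z$ with $\langle z,u\rangle>0$ for all $u\in C^+(H^\perp)$; (v) $Z^\perp\cap C^+(H^\perp)=\emptyset$.
   Context: A pseudo-Euclidean space of signature $(k,l)$ is a finite-dimensional real vector space with a symmetric non-degenerate bilinear form whose Sylvester diagonal form has $k$ entries $+1$ and $l$ entries $-1$. For a subspace $L$, $q^+(L)$ denotes the number of $+1$'s in a diagonalization of the restriction of the form to $L$, and $L^\perp$ is the orthogonal complement in $V$. A positive $r$-plane is an $r$-dimensional subspace on which the form is positive definite. $H$ is $Z$-extendable if there is $z\in Z$ with $H+\mathbb{R}z$ a positive $k$-plane. *)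

theory Defs
  imports "HOL-Analysis.Analysis"
begin

text \<open>A (finite-dimensional) real vector space V is modelled as a type of class
euclidean_space (carrying its standard topology); the pseudo-Euclidean form is B.\<close>

definition pseudo_euclidean_form :: "('a::euclidean_space \<Rightarrow> 'a \<Rightarrow> real) \<Rightarrow> bool" where
  "pseudo_euclidean_form B \<longleftrightarrow> bilinear B \<and> (\<forall>x y. B x y = B y x)
     \<and> (\<forall>x. (\<forall>y. B x y = 0) \<longrightarrow> x = 0)"

definition diag_basis :: "('a::euclidean_space \<Rightarrow> 'a \<Rightarrow> real) \<Rightarrow> 'a set \<Rightarrow> 'a set \<Rightarrow> bool" where
  "diag_basis B L Bs \<longleftrightarrow> finite Bs \<and> independent Bs \<and> span Bs = L
     \<and> (\<forall>b\<in>Bs. \<forall>c\<in>Bs. b \<noteq> c \<longrightarrow> B b c = 0)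
     \<and> (\<forall>b\<in>Bs. B b b = 1 \<or> B b b = -1 \<or> B b b = 0)"

definition q_plus :: "('a::euclidean_space \<Rightarrow> 'a \<Rightarrow> real) \<Rightarrow> 'a set \<Rightarrow> nat" where
  "q_plus B L = card {b \<in> (SOME Bs. diag_basis B L Bs). B b b = 1}"

definition q_minus :: "('a::euclidean_space \<Rightarrow> 'a \<Rightarrow> real) \<Rightarrow> 'a set \<Rightarrow> nat" where
  "q_minus B L = card {b \<in> (SOME Bs. diag_basis B L Bs). B b b = -1}"

definition has_signature :: "('a::euclidean_space \<Rightarrow> 'a \<Rightarrow> real) \<Rightarrow> nat \<Rightarrow> nat \<Rightarrow> bool" where
  "has_signature B k l \<longleftrightarrow> pseudo_euclidean_form B \<and> q_plus B UNIV = k \<and> q_minus B UNIV = l"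

definition orth :: "('a::euclidean_space \<Rightarrow> 'a \<Rightarrow> real) \<Rightarrow> 'a set \<Rightarrow> 'a set" where
  "orth B L = {v. \<forall>u\<in>L. B u v = 0}"

definition positive_plane :: "('a::euclidean_space \<Rightarrow> 'a \<Rightarrow> real) \<Rightarrow> nat \<Rightarrow> 'a set \<Rightarrow> bool" where
  "positive_plane B r P \<longleftrightarrow> subspace P \<and> dim P = r \<and> (\<forall>x\<in>P. x \<noteq> 0 \<longrightarrow> B x x > 0)"

definition set_plus :: "'a::euclidean_space set \<Rightarrow> 'a set \<Rightarrow> 'a set" where
  "set_plus A C = {x + y | x y. x \<in> A \<and> y \<in> C}"

definition extendable :: "('a::euclidean_space \<Rightarrow> 'a \<Rightarrow> real) \<Rightarrow> nat \<Rightarrow> 'a set \<Rightarrow> 'a set \<Rightarrow> bool" where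
  "extendable B k Z H \<longleftrightarrow> (\<exists>z\<in>Z. positive_plane B k (set_plus H {t *\<^sub>R z | t. True}))"

definition minkowski_subspace :: "('a::euclidean_space \<Rightarrow> 'a \<Rightarrow> real) \<Rightarrow> nat \<Rightarrow> 'a set \<Rightarrow> bool" where
  "minkowski_subspace B l M \<longleftrightarrow> subspace M \<and> (\<forall>x\<in>M. (\<forall>y\<in>M. B x y = 0) \<longrightarrow> x = 0)
     \<and> q_plus B M = 1 \<and> q_minus B M = l"

definition causal_cone :: "('a::euclidean_space \<Rightarrow> 'a \<Rightarrow> real) \<Rightarrow> 'a set \<Rightarrow> 'a set" where
  "causal_cone B M = {w \<in> M. B w w \<ge> 0} - {0}"

end

theory Submission
  imports Defs
begin

text \<open>Since H is positive definite, V is the orthogonal sum of H and W = orth B H, so by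
additivity of q_plus and q_minus the space W is nondegenerate of signature (1,l): it contains a
unit timelike vector e whose orthogonal complement in W is negative definite. The causal cone of W
splits by the sign of B w e into two star-shaped halves, which are therefore its components. With
P the B-orthogonal projection onto W one has H + \<real>z = H \<oplus> \<real>Pz, H + Z = H \<oplus> P(Z),
(H + Z) \<inter> W = P(Z), and B z u = B (P z) u for u in W. Hence each of (i)-(v) says that the
subspace P(Z) of the Minkowski space W contains a timelike vector: for (iv) by the reverse
Cauchy--Schwarz inequality, for (v) because a subspace of W without timelike vectors is orthogonal
to some future causal vector.\<close>

section \<open>Symmetric bilinear forms and Sylvester's law of inertia\<close>

lemma bilinear_simps:
  fixes B :: "'a::euclidean_space \<Rightarrow> 'a \<Rightarrow> real"
  assumes "bilinear B"
  shows "B (x + y) z = B x z + B y z" "B z (x + y) = B z x + B z y"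
    "B (a *\<^sub>R x) z = a * B x z" "B z (a *\<^sub>R x) = a * B z x"
    "B (x - y) z = B x z - B y z" "B z (x - y) = B z x - B z y"
    "B (- x) z = - B x z" "B z (- x) = - B z x"
    "B 0 z = 0" "B z 0 = 0"
  using assms by (simp_all add: bilinear_ladd bilinear_radd bilinear_lmul bilinear_rmul
      bilinear_lsub bilinear_rsub bilinear_lneg bilinear_rneg bilinear_lzero bilinear_rzero)

lemma bilinear_sum_left:
  fixes B :: "'a::euclidean_space \<Rightarrow> 'a \<Rightarrow> real"
  assumes "bilinear B"
  shows "B (\<Sum>a\<in>S. c a *\<^sub>R a) y = (\<Sum>a\<in>S. c a * B a y)"
proof -
  have lin: "linear (\<lambda>x. B x y)" using assms by (simp add: bilinear_def)
  show ?thesis by (simp add: linear_sum[OF lin] linear_scale[OF lin])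
qed

lemma bilinear_sum_right:
  fixes B :: "'a::euclidean_space \<Rightarrow> 'a \<Rightarrow> real"
  assumes "bilinear B"
  shows "B x (\<Sum>a\<in>S. c a *\<^sub>R a) = (\<Sum>a\<in>S. c a * B x a)"
proof -
  have lin: "linear (B x)" using assms by (simp add: bilinear_def)
  show ?thesis by (simp add: linear_sum[OF lin] linear_scale[OF lin])
qed

lemma bilinear_sum_orthogonal_left:
  fixes B :: "'a::euclidean_space \<Rightarrow> 'a \<Rightarrow> real"
  assumes "bilinear B" and "finite S" and "\<forall>a\<in>S. \<forall>b\<in>S. a \<noteq> b \<longrightarrow> B a b = 0"
    and "b \<in> S"
  shows "B (\<Sum>a\<in>S. c a *\<^sub>R a) b = c b * B b b"
proof -
  have "(\<Sum>a\<in>S. c a * B a b) = c b * B b b + (\<Sum>a\<in>S-{b}. c a * B a b)"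
    using sum.remove[OF assms(2,4)] by simp
  also have "(\<Sum>a\<in>S-{b}. c a * B a b) = 0"
    using assms(3,4) by (intro sum.neutral) auto
  finally show ?thesis by (simp add: bilinear_sum_left[OF assms(1)])
qed

lemma bilinear_sum_orthogonal:
  fixes B :: "'a::euclidean_space \<Rightarrow> 'a \<Rightarrow> real"
  assumes "bilinear B" and "finite S" and "\<forall>a\<in>S. \<forall>b\<in>S. a \<noteq> b \<longrightarrow> B a b = 0"
  shows "B (\<Sum>a\<in>S. c a *\<^sub>R a) (\<Sum>b\<in>S. d b *\<^sub>R b) = (\<Sum>b\<in>S. c b * d b * B b b)"
  using bilinear_sum_orthogonal_left[OF assms]
  by (simp add: bilinear_sum_right[OF assms(1)] mult_ac cong: sum.cong)

lemma subspace_orth: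
  fixes B :: "'a::euclidean_space \<Rightarrow> 'a \<Rightarrow> real"
  assumes "bilinear B"
  shows "subspace (orth B L)"
  using bilinear_simps[OF assms] by (auto simp: subspace_def orth_def)

lemma bilinear_span_orthogonal_left:
  fixes B :: "'a::euclidean_space \<Rightarrow> 'a \<Rightarrow> real"
  assumes "bilinear B" and "\<forall>u\<in>S. B u x = 0" and "v \<in> span S"
  shows "B v x = 0"
proof -
  have "subspace {u. B u x = 0}" using bilinear_simps[OF assms(1)] by (auto simp: subspace_def)
  then show ?thesis using span_minimal[of S "{u. B u x = 0}"] assms(2,3) by auto
qed

locale symmetric_bilinear_form =
  fixes B :: "'a::euclidean_space \<Rightarrow> 'a \<Rightarrow> real"
  assumes bilinear: "bilinear B" and symmetric: "B x y = B y x"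
begin

lemmas form_simps = bilinear_simps[OF bilinear]

lemma diag_basis_of_isotropic:
  assumes L: "subspace L" and iso: "\<forall>x\<in>L. B x x = 0"
  shows "\<exists>Bs. diag_basis B L Bs"
proof -
  have zero: "B x y = 0" if "x \<in> L" "y \<in> L" for x y
  proof -
    have "x + y \<in> L" using L that by (rule subspace_add)
    then have "B (x + y) (x + y) = 0" using iso by blast
    moreover have "B (x + y) (x + y) = B x x + B y y + 2 * B x y"
      using form_simps(1,2) symmetric[of y x] by simp
    ultimately show ?thesis using iso that by simp
  qed
  obtain Bs where Bs: "Bs \<subseteq> L" "independent Bs" "L \<subseteq> span Bs" "card Bs = dim L"
    using basis_exists[of L] by blast
  have "span Bs = L" using Bs span_minimal[OF Bs(1) L] by auto
  moreover have "finite Bs" using Bs(2) by (rule independent_imp_finite)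
  moreover have "\<forall>b\<in>Bs. \<forall>c\<in>Bs. B b c = 0" using Bs(1) zero by blast
  ultimately show ?thesis using Bs(2) unfolding diag_basis_def by blast
qed

lemma diag_basis_insert:
  assumes L: "subspace L" and e: "e \<in> L" "B e e = 1 \<or> B e e = -1"
    and Bs: "diag_basis B {y \<in> L. B e y = 0} Bs"
  shows "diag_basis B L (insert e Bs)"
proof -
  let ?L' = "{y \<in> L. B e y = 0}"
  have fin: "finite Bs" and ind: "independent Bs" and spB: "span Bs = ?L'"
    using Bs by (auto simp: diag_basis_def)
  have eL': "e \<notin> ?L'" using e by auto
  have "independent (insert e Bs)"
    using ind eL' spB span_base[of e Bs] by (auto simp: independent_insert)
  moreover have "span (insert e Bs) = L"
  proof
    show "span (insert e Bs) \<subseteq> L"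
      using span_minimal[of "insert e Bs" L] e spB span_superset[of Bs] L by auto
    show "L \<subseteq> span (insert e Bs)"
    proof
      fix y assume y: "y \<in> L"
      have "y - (B e y / B e e) *\<^sub>R e \<in> ?L'"
        using y e L form_simps by (auto simp: subspace_diff subspace_scale)
      then show "y \<in> span (insert e Bs)" using span_breakdown_eq spB by blast
    qed
  qed
  moreover have "\<forall>b\<in>insert e Bs. \<forall>c\<in>insert e Bs. b \<noteq> c \<longrightarrow> B b c = 0"
  proof -
    have "\<forall>x\<in>Bs. B e x = 0" using spB span_superset[of Bs] by auto
    then have "\<forall>x\<in>Bs. B e x = 0 \<and> B x e = 0" using symmetric by metis
    then show ?thesis using Bs unfolding diag_basis_def by auto
  qed
  ultimately show ?thesis using Bs e fin unfolding diag_basis_def by blast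
qed

lemma diag_basis_exists:
  "subspace L \<Longrightarrow> \<exists>Bs. diag_basis B L Bs"
proof (induction "dim L" arbitrary: L rule: less_induct)
  case less
  show ?case
  proof (cases "\<forall>x\<in>L. B x x = 0")
    case True
    then show ?thesis using diag_basis_of_isotropic[OF less.prems] by blast
  next
    case False
    then obtain x where x: "x \<in> L" "B x x \<noteq> 0" by blast
    define e where "e = (1 / sqrt \<bar>B x x\<bar>) *\<^sub>R x"
    have "B e e = B x x / \<bar>B x x\<bar>"
      using form_simps x by (simp add: e_def real_sqrt_mult[symmetric])
    then have ee: "B e e = 1 \<or> B e e = -1" using x by (auto simp: abs_if)
    have eL: "e \<in> L" using x less.prems by (simp add: e_def subspace_scale)
    let ?L' = "{y \<in> L. B e y = 0}"
    have sub: "subspace ?L'" using less.prems form_simps by (auto simp: subspace_def)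
    have "e \<notin> ?L'" using ee by auto
    then have "?L' \<subset> L" using eL by blast
    then have "dim ?L' < dim L" using dim_psubset[of ?L' L] span_eq_iff sub less.prems by metis
    then obtain Bs where "diag_basis B ?L' Bs" using less sub by blast
    then show ?thesis using diag_basis_insert[OF less.prems eL ee] by blast
  qed
qed

lemma diag_basis_positive_plane:
  assumes D: "diag_basis B L Bs"
  shows "positive_plane B (card {b\<in>Bs. B b b = 1}) (span {b\<in>Bs. B b b = 1})"
    and "span {b\<in>Bs. B b b = 1} \<subseteq> L"
proof -
  let ?Pos = "{b\<in>Bs. B b b = 1}"
  have fin: "finite ?Pos" and ind: "independent ?Pos"
    and orth: "\<forall>a\<in>?Pos. \<forall>b\<in>?Pos. a \<noteq> b \<longrightarrow> B a b = 0"
    using D independent_mono[of Bs ?Pos] by (auto simp: diag_basis_def)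
  have "B x x > 0" if x: "x \<in> span ?Pos" "x \<noteq> 0" for x
  proof -
    obtain c where c: "x = (\<Sum>b\<in>?Pos. c b *\<^sub>R b)" using x(1) span_finite[OF fin] by auto
    have "B x x = (\<Sum>b\<in>?Pos. (c b)\<^sup>2)"
      using bilinear_sum_orthogonal[OF bilinear fin orth] c by (simp add: power2_eq_square)
    moreover have "\<exists>b\<in>?Pos. c b \<noteq> 0"
      using c x(2) sum.neutral[of ?Pos "\<lambda>b. c b *\<^sub>R b"] by auto
    ultimately show ?thesis using fin by (metis (no_types, lifting) sum_pos2 zero_le_power2 zero_less_power2)
  qed
  then show "positive_plane B (card ?Pos) (span ?Pos)"
    using dim_span dim_eq_card_independent[OF ind] by (simp add: positive_plane_def)
  show "span ?Pos \<subseteq> L" using D span_mono[of ?Pos Bs] by (auto simp: diag_basis_def)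
qed

text \<open>A positive plane inside L meets the span of the non-positive basis vectors only in 0,
so its dimension is bounded by the number of positive ones (Sylvester's law of inertia).\<close>

lemma positive_plane_dim_le:
  assumes D: "diag_basis B L Bs" and P: "positive_plane B r P" "P \<subseteq> L"
  shows "r \<le> card {b\<in>Bs. B b b = 1}"
proof -
  define N where "N = {b\<in>Bs. B b b \<noteq> 1}"
  have finB: "finite Bs" and indB: "independent Bs" and spB: "span Bs = L"
    using D by (auto simp: diag_basis_def)
  have fin: "finite N" and ind: "independent N"
    and orth: "\<forall>a\<in>N. \<forall>b\<in>N. a \<noteq> b \<longrightarrow> B a b = 0" and nonpos: "\<forall>b\<in>N. B b b \<le> 0"
    using D independent_mono[of Bs N] by (auto simp: diag_basis_def N_def)
  have subP: "subspace P" and dimP: "dim P = r" and posP: "\<forall>x\<in>P. x \<noteq> 0 \<longrightarrow> B x x > 0"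
    using P(1) by (auto simp: positive_plane_def)
  have "P \<inter> span N \<subseteq> {0}"
  proof
    fix x assume x: "x \<in> P \<inter> span N"
    obtain c where c: "x = (\<Sum>b\<in>N. c b *\<^sub>R b)" using x span_finite[OF fin] by auto
    have "B x x = (\<Sum>b\<in>N. c b * c b * B b b)" using bilinear_sum_orthogonal[OF bilinear fin orth] c by simp
    also have "\<dots> \<le> 0" using nonpos by (intro sum_nonpos) (simp add: mult_nonneg_nonpos)
    finally show "x \<in> {0}" using posP x by force
  qed
  then have "dim (P \<inter> span N) = 0" by (simp add: dim_eq_0)
  moreover have "dim (set_plus P (span N)) + dim (P \<inter> span N) = dim P + dim (span N)"
    using dim_sums_Int[OF subP, of "span N"] by (simp add: set_plus_def)
  moreover have "set_plus P (span N) \<subseteq> L"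
  proof -
    have "span N \<subseteq> L" using span_mono[of N Bs] spB by (auto simp: N_def)
    then show ?thesis using P(2) spB subspace_add[OF subspace_span, of _ Bs]
      by (auto simp: set_plus_def)
  qed
  then have "dim (set_plus P (span N)) \<le> dim L" by (rule dim_subset)
  moreover have "dim L = card Bs" using spB dim_span dim_eq_card_independent[OF indB] by metis
  moreover have "dim (span N) = card N" using dim_span dim_eq_card_independent[OF ind] by simp
  moreover have "card Bs = card {b\<in>Bs. B b b = 1} + card N"
  proof -
    have "Bs = {b\<in>Bs. B b b = 1} \<union> N" by (auto simp: N_def)
    then show ?thesis using finB card_Un_disjoint[of "{b\<in>Bs. B b b = 1}" N] by (auto simp: N_def)
  qed
  ultimately show ?thesis using dimP by linarith
qed

lemma q_plus_diag_basis:
  assumes "diag_basis B L Bs"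
  shows "q_plus B L = card {b\<in>Bs. B b b = 1}"
proof -
  define S where "S = (SOME Bs. diag_basis B L Bs)"
  have DS: "diag_basis B L S" unfolding S_def using assms by (rule someI)
  show ?thesis
    using positive_plane_dim_le[OF assms diag_basis_positive_plane[OF DS]]
      positive_plane_dim_le[OF DS diag_basis_positive_plane[OF assms]]
    unfolding q_plus_def S_def[symmetric] by simp
qed

lemma q_minus_diag_basis:
  assumes D: "diag_basis B L Bs"
  shows "q_minus B L = card {b\<in>Bs. B b b = -1}"
proof -
  interpret neg: symmetric_bilinear_form "\<lambda>x y. - B x y"
  proof
    have "linear (B x)" "linear (\<lambda>y. B y x)" for x using bilinear by (auto simp: bilinear_def)
    then show "bilinear (\<lambda>x y. - B x y)" by (simp add: bilinear_def linear_compose_neg)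
  qed (rule arg_cong[OF symmetric])
  have diag_neg: "diag_basis (\<lambda>x y. - B x y) L = diag_basis B L"
    unfolding diag_basis_def by (intro ext conj_cong refl) auto
  have "q_minus B L = q_plus (\<lambda>x y. - B x y) L"
    unfolding q_minus_def q_plus_def diag_neg by (intro arg_cong[where f=card] Collect_cong) auto
  also have "\<dots> = card {b\<in>Bs. - B b b = 1}"
    using neg.q_plus_diag_basis D diag_neg by simp
  finally show ?thesis by (simp add: minus_equation_iff[of _ 1] eq_commute)
qed

lemma positive_plane_le_q_plus:
  assumes "subspace L" "positive_plane B r P" "P \<subseteq> L"
  shows "r \<le> q_plus B L"
proof -
  obtain Bs where D: "diag_basis B L Bs" using diag_basis_exists[OF assms(1)] by blast
  show ?thesis using positive_plane_dim_le[OF D assms(2,3)] q_plus_diag_basis[OF D] by simp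
qed

lemma positive_plane_span_singleton:
  assumes "B x x > 0"
  shows "positive_plane B 1 (span {x})"
proof -
  have "B y y > 0" if y: "y \<in> span {x}" "y \<noteq> 0" for y
  proof -
    obtain t where "y = t *\<^sub>R x" "t \<noteq> 0" using y by (auto simp: span_singleton)
    then have "B y y = (t * t) * B x x" using form_simps by simp
    moreover have "t * t > 0" using \<open>t \<noteq> 0\<close> by (auto simp: zero_less_mult_iff linorder_neq_iff)
    ultimately show ?thesis using assms by simp
  qed
  moreover have "x \<noteq> 0" using assms form_simps by auto
  ultimately show ?thesis by (simp add: positive_plane_def dim_span)
qed

lemma q_plus_ge_1_iff:
  assumes L: "subspace L"
  shows "1 \<le> q_plus B L \<longleftrightarrow> (\<exists>x\<in>L. B x x > 0)"
proof
  obtain Bs where D: "diag_basis B L Bs" using diag_basis_exists[OF L] by blast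
  assume "1 \<le> q_plus B L"
  then have "{b\<in>Bs. B b b = 1} \<noteq> {}" using q_plus_diag_basis[OF D] by (metis card.empty not_one_le_zero)
  then obtain b where b: "b \<in> Bs" "B b b = 1" by blast
  moreover have "Bs \<subseteq> L" using D span_superset[of Bs] by (auto simp: diag_basis_def)
  ultimately show "\<exists>x\<in>L. B x x > 0" by (intro bexI[of _ b]) auto
next
  assume "\<exists>x\<in>L. B x x > 0"
  then obtain x where x: "x \<in> L" "B x x > 0" by blast
  have "span {x} \<subseteq> L" using x(1) L by (simp add: span_minimal)
  then show "1 \<le> q_plus B L"
    using positive_plane_le_q_plus[OF L positive_plane_span_singleton[OF x(2)]] by blast
qed

lemma diag_basis_orthogonal_sum:
  assumes DA: "diag_basis B L1 A" and DC: "diag_basis B L2 C" and L12: "L1 \<inter> L2 = {0}"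
    and orth: "\<forall>a\<in>A. \<forall>c\<in>C. B a c = 0"
  shows "diag_basis B (set_plus L1 L2) (A \<union> C)" and "A \<inter> C = {}"
proof -
  have A: "finite A" "independent A" "span A = L1" and C: "finite C" "independent C" "span C = L2"
    using DA DC by (auto simp: diag_basis_def)
  show "A \<inter> C = {}"
  proof (rule ccontr)
    assume "A \<inter> C \<noteq> {}"
    then obtain x where x: "x \<in> A" "x \<in> C" by blast
    then have "x \<in> L1 \<inter> L2" using A(3) C(3) span_base by blast
    then have "x = 0" using L12 by blast
    then show False using x(1) A(2) dependent_zero by blast
  qed
  have sp: "span (A \<union> C) = set_plus L1 L2" by (simp only: span_Un A(3) C(3) set_plus_def)
  have "card (A \<union> C) \<le> card A + card C" by (rule card_Un_le)
  also have "\<dots> = dim L1 + dim L2"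
    using A C dim_span dim_eq_card_independent by metis
  also have "\<dots> = dim (set_plus L1 L2)"
  proof -
    have "subspace L1" "subspace L2" using A(3) C(3) subspace_span by metis+
    then show ?thesis using dim_sums_Int[of L1 L2] L12 by (simp add: set_plus_def)
  qed
  finally have "card (A \<union> C) \<le> dim (span (A \<union> C))" using sp by simp
  then have "independent (A \<union> C)"
    using card_le_dim_spanning[of "A \<union> C" "span (A \<union> C)"] A(1) C(1) span_superset by blast
  moreover have "\<forall>a\<in>A \<union> C. \<forall>c\<in>A \<union> C. a \<noteq> c \<longrightarrow> B a c = 0"
  proof -
    have "B c a = 0" if "a \<in> A" "c \<in> C" for a c using orth that symmetric[of c a] by simp
    then show ?thesis using DA DC orth unfolding diag_basis_def by blast
  qed
  ultimately show "diag_basis B (set_plus L1 L2) (A \<union> C)"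
    using sp A C DA DC unfolding diag_basis_def by blast
qed

lemma
  assumes L1: "subspace L1" and L2: "subspace L2" and L12: "L1 \<inter> L2 = {0}"
    and orth: "\<forall>x\<in>L1. \<forall>y\<in>L2. B x y = 0"
  shows q_plus_orthogonal_sum: "q_plus B (set_plus L1 L2) = q_plus B L1 + q_plus B L2"
    and q_minus_orthogonal_sum: "q_minus B (set_plus L1 L2) = q_minus B L1 + q_minus B L2"
proof -
  obtain A C where DA: "diag_basis B L1 A" and DC: "diag_basis B L2 C"
    using diag_basis_exists[OF L1] diag_basis_exists[OF L2] by blast
  have "A \<subseteq> L1" "C \<subseteq> L2" using DA DC span_superset by (auto simp: diag_basis_def)
  then have "\<forall>a\<in>A. \<forall>c\<in>C. B a c = 0" using orth by blast
  note D = diag_basis_orthogonal_sum[OF DA DC L12 this]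
  have fin: "finite A" "finite C" using DA DC by (auto simp: diag_basis_def)
  have card_filter: "card {b\<in>A \<union> C. P b} = card {b\<in>A. P b} + card {b\<in>C. P b}" for P
  proof -
    have "{b\<in>A \<union> C. P b} = {b\<in>A. P b} \<union> {b\<in>C. P b}" by auto
    then show ?thesis using fin D(2) card_Un_disjoint[of "{b\<in>A. P b}" "{b\<in>C. P b}"] by auto
  qed
  show "q_plus B (set_plus L1 L2) = q_plus B L1 + q_plus B L2"
    using q_plus_diag_basis[OF D(1)] q_plus_diag_basis[OF DA] q_plus_diag_basis[OF DC] card_filter
    by simp
  show "q_minus B (set_plus L1 L2) = q_minus B L1 + q_minus B L2"
    using q_minus_diag_basis[OF D(1)] q_minus_diag_basis[OF DA] q_minus_diag_basis[OF DC] card_filter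
    by simp
qed

lemma
  assumes P: "subspace P" and pos: "\<forall>x\<in>P. x \<noteq> 0 \<longrightarrow> B x x > 0"
  shows q_plus_positive_definite: "q_plus B P = dim P"
    and q_minus_positive_definite: "q_minus B P = 0"
proof -
  obtain Bs where D: "diag_basis B P Bs" using diag_basis_exists[OF P] by blast
  have "B b b = 1" if "b \<in> Bs" for b
  proof -
    have "b \<noteq> 0" "b \<in> P" using D that dependent_zero span_superset by (auto simp: diag_basis_def)
    then have "B b b > 0" using pos by blast
    moreover have "B b b = 1 \<or> B b b = -1 \<or> B b b = 0" using D that by (simp add: diag_basis_def)
    ultimately show ?thesis by linarith
  qed
  then have pos_Bs: "{b\<in>Bs. B b b = 1} = Bs" and neg_Bs: "{b\<in>Bs. B b b = -1} = {}" by force+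
  have "dim P = card Bs" using D dim_span dim_eq_card_independent by (metis diag_basis_def)
  then show "q_plus B P = dim P" unfolding q_plus_diag_basis[OF D] pos_Bs by simp
  show "q_minus B P = 0" unfolding q_minus_diag_basis[OF D] neg_Bs by simp
qed

lemma q_plus_mono:
  assumes "subspace L" "subspace L'" "L \<subseteq> L'"
  shows "q_plus B L \<le> q_plus B L'"
proof -
  obtain Bs where D: "diag_basis B L Bs" using diag_basis_exists[OF assms(1)] by blast
  show ?thesis
    using positive_plane_le_q_plus[OF assms(2) diag_basis_positive_plane(1)[OF D]]
      diag_basis_positive_plane(2)[OF D] assms(3) q_plus_diag_basis[OF D] by simp
qed

end

section \<open>Lorentzian subspaces and their causal cones\<close>

lemma quadratic_nonpos_discriminant:
  fixes a b c :: real
  assumes "\<forall>t. a + 2 * t * b + t\<^sup>2 * c \<le> 0" and "c \<le> 0"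
  shows "b\<^sup>2 \<le> a * c"
proof (cases "c = 0")
  case True
  have "b = 0"
  proof (rule ccontr)
    assume "b \<noteq> 0"
    have "a + 2 * ((1 - a) / (2 * b)) * b + ((1 - a) / (2 * b))\<^sup>2 * c \<le> 0" using assms(1) by blast
    then show False using True \<open>b \<noteq> 0\<close> by (simp add: field_simps)
  qed
  then show ?thesis using True by simp
next
  case False
  then have c: "c < 0" using assms(2) by simp
  have "a + 2 * (- b / c) * b + (- b / c)\<^sup>2 * c \<le> 0" using assms(1) by blast
  then have "a - b\<^sup>2 / c \<le> 0" using c by (simp add: field_simps power2_eq_square)
  then have "(a - b\<^sup>2 / c) * c \<ge> 0" using c by (simp add: mult_nonpos_nonpos)
  then show ?thesis using c by (simp add: field_simps)
qed

definition future_cone :: "('a::euclidean_space \<Rightarrow> 'a \<Rightarrow> real) \<Rightarrow> 'a set \<Rightarrow> 'a \<Rightarrow> 'a set" where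
  "future_cone B W e = {w \<in> causal_cone B W. B w e > 0}"

locale lorentzian_frame = symmetric_bilinear_form +
  fixes W :: "'a::euclidean_space set" and e :: 'a
  assumes subspace_W: "subspace W" and e_in_W: "e \<in> W" and e_unit: "B e e = 1"
    and negative_on_orth_e: "w \<in> W \<Longrightarrow> B w e = 0 \<Longrightarrow> w \<noteq> 0 \<Longrightarrow> B w w < 0"
begin

lemma lorentzian_frame_uminus: "lorentzian_frame B W (- e)"
  using subspace_W e_in_W e_unit negative_on_orth_e form_simps
  by unfold_locales (auto simp: subspace_neg)

lemma nonpos_on_orth_e: "w \<in> W \<Longrightarrow> B w e = 0 \<Longrightarrow> B w w \<le> 0"
  using negative_on_orth_e form_simps by (cases "w = 0") (auto intro: less_imp_le)

lemma orth_e_part: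
  assumes "w \<in> W"
  shows "w - B w e *\<^sub>R e \<in> W" and "B (w - B w e *\<^sub>R e) e = 0"
  using assms e_in_W e_unit subspace_W form_simps by (auto simp: subspace_diff subspace_scale)

lemma form_split_e:
  assumes "B x e = 0" "B y e = 0"
  shows "B (a *\<^sub>R e + x) (b *\<^sub>R e + y) = a * b + B x y"
  using assms e_unit form_simps symmetric[of e y] by (simp add: algebra_simps)

lemma causal_cone_not_orth_e:
  assumes "w \<in> causal_cone B W"
  shows "B w e \<noteq> 0"
  using assms negative_on_orth_e by (fastforce simp: causal_cone_def)

lemma causal_cone_future_or_past:
  assumes "w \<in> causal_cone B W"
  shows "w \<in> future_cone B W e \<or> - w \<in> future_cone B W e"
proof -
  have "- w \<in> causal_cone B W"
    using assms subspace_W form_simps by (auto simp: causal_cone_def subspace_neg)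
  then show ?thesis
    using assms causal_cone_not_orth_e[OF assms] form_simps by (auto simp: future_cone_def)
qed

lemma e_in_future_cone: "e \<in> future_cone B W e"
  using e_in_W e_unit form_simps by (auto simp: future_cone_def causal_cone_def)

text \<open>Writing w = a e + w0 with w0 orthogonal to e, the segment from e to w stays causal
because its e-coefficient dominates u a, while its e-orthogonal part is u w0.\<close>

lemma future_cone_starlike: "starlike (future_cone B W e)"
  unfolding starlike_def
proof (intro bexI[OF _ e_in_future_cone] ballI subsetI)
  fix w x assume w: "w \<in> future_cone B W e" and x: "x \<in> closed_segment e w"
  have wW: "w \<in> W" and ww: "B w w \<ge> 0" and a: "B w e > 0"
    using w by (auto simp: future_cone_def causal_cone_def)
  define a where "a = B w e"
  define w0 where "w0 = w - a *\<^sub>R e"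
  have w0: "w0 \<in> W" "B w0 e = 0" using orth_e_part[OF wW] by (simp_all add: w0_def a_def)
  have "B w w = a * a + B w0 w0"
    using form_split_e[OF w0(2) w0(2), of a a] by (simp add: w0_def)
  then have aw0: "a * a + B w0 w0 \<ge> 0" using ww by simp
  obtain u where u: "0 \<le> u" "u \<le> 1" "x = (1 - u) *\<^sub>R e + u *\<^sub>R w"
    using x by (auto simp: closed_segment_def)
  define s where "s = (1 - u) + u * a"
  have x_split: "x = s *\<^sub>R e + u *\<^sub>R w0" by (simp add: u(3) s_def w0_def algebra_simps)
  have uw0: "B (u *\<^sub>R w0) e = 0" using w0(2) form_simps by simp
  have xe: "B x e = s" using x_split uw0 e_unit form_simps by simp
  have ua: "0 \<le> u * a" using u a by (simp add: a_def)
  have s0: "s > 0"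
  proof (cases "u = 0")
    case False
    then have "u * a > 0" using u a by (simp add: a_def)
    then show ?thesis using u by (simp add: s_def)
  qed (simp add: s_def)
  have "B x x = s * s + u * u * B w0 w0"
    using x_split form_split_e[OF uw0 uw0] form_simps by simp
  moreover have "s * s \<ge> (u * a) * (u * a)" using ua u by (intro mult_mono) (auto simp: s_def)
  moreover have "u * u * (a * a + B w0 w0) \<ge> 0" using aw0 by simp
  ultimately have "B x x \<ge> 0" by (simp add: algebra_simps)
  moreover have "x \<in> W" using x_split subspace_W e_in_W w0(1) by (simp add: subspace_add subspace_scale)
  moreover have "x \<noteq> 0" using xe s0 form_simps by auto
  ultimately show "x \<in> future_cone B W e" using xe s0 by (simp add: future_cone_def causal_cone_def)
qed

text \<open>B (-) e is continuous and does not vanish on the causal cone, so it has constant sign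
on each connected component.\<close>

lemma connected_component_future_cone:
  assumes x: "x \<in> future_cone B W e"
  shows "connected_component_set (causal_cone B W) x = future_cone B W e"
proof
  have "future_cone B W e \<subseteq> causal_cone B W" by (auto simp: future_cone_def)
  then show "future_cone B W e \<subseteq> connected_component_set (causal_cone B W) x"
    using connected_component_maximal[OF x starlike_imp_connected[OF future_cone_starlike]] by blast
next
  let ?D = "connected_component_set (causal_cone B W) x"
  have DK: "?D \<subseteq> causal_cone B W" by (rule connected_component_subset)
  have "linear (\<lambda>w. B w e)" using bilinear by (simp add: bilinear_def)
  then have "continuous_on ?D (\<lambda>w. B w e)" by (simp add: linear_continuous_on linear_conv_bounded_linear)
  then have conn: "connected ((\<lambda>w. B w e) ` ?D)"
    using connected_continuous_image connected_connected_component by blast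
  have xD: "x \<in> ?D" using x by (auto simp: future_cone_def intro: connected_component_refl)
  show "?D \<subseteq> future_cone B W e"
  proof
    fix y assume y: "y \<in> ?D"
    have "B y e > 0"
    proof (rule ccontr)
      assume "\<not> B y e > 0"
      moreover have "B x e > 0" using x by (simp add: future_cone_def)
      ultimately have "0 \<in> (\<lambda>w. B w e) ` ?D"
        using connectedD_interval[OF conn, of "B y e" "B x e" 0] xD y by auto
      then show False using causal_cone_not_orth_e DK by fastforce
    qed
    then show "y \<in> future_cone B W e" using y DK by (auto simp: future_cone_def)
  qed
qed

lemma components_causal_cone:
  "components (causal_cone B W) = {future_cone B W e, future_cone B W (- e)}"
proof -
  interpret past: lorentzian_frame B W "- e" by (rule lorentzian_frame_uminus)
  have "- w \<in> W \<longleftrightarrow> w \<in> W" for w using subspace_neg[OF subspace_W] by force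
  then have past_eq: "future_cone B W (- e) = {w. - w \<in> future_cone B W e}"
    using form_simps by (auto simp: future_cone_def causal_cone_def)
  have "connected_component_set (causal_cone B W) x \<in> {future_cone B W e, future_cone B W (- e)}"
    if "x \<in> causal_cone B W" for x
    using causal_cone_future_or_past[OF that] connected_component_future_cone
      past.connected_component_future_cone past_eq by blast
  moreover have "future_cone B W e \<in> connected_component_set (causal_cone B W) ` causal_cone B W"
    using connected_component_future_cone[OF e_in_future_cone] e_in_future_cone
    by (force simp: future_cone_def)
  moreover have "future_cone B W (- e) \<in> connected_component_set (causal_cone B W) ` causal_cone B W"
    using past.connected_component_future_cone[OF past.e_in_future_cone] past.e_in_future_cone
    by (force simp: future_cone_def)
  ultimately show ?thesis unfolding components_def by blast
qed

lemma future_cone_neq_past: "future_cone B W e \<noteq> future_cone B W (- e)"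
  using e_in_future_cone e_unit form_simps by (auto simp: future_cone_def)

lemma cauchy_schwarz_orth_e:
  assumes x: "x \<in> W" "B x e = 0" and y: "y \<in> W" "B y e = 0"
  shows "(B x y)\<^sup>2 \<le> B x x * B y y"
proof (rule quadratic_nonpos_discriminant)
  show "B y y \<le> 0" using nonpos_on_orth_e y by blast
  show "\<forall>t. B x x + 2 * t * B x y + t\<^sup>2 * B y y \<le> 0"
  proof
    fix t
    have "x + t *\<^sub>R y \<in> W" using x y subspace_W by (simp add: subspace_add subspace_scale)
    moreover have "B (x + t *\<^sub>R y) e = 0" using x y form_simps by simp
    ultimately have "B (x + t *\<^sub>R y) (x + t *\<^sub>R y) \<le> 0" by (rule nonpos_on_orth_e)
    moreover have "B (x + t *\<^sub>R y) (x + t *\<^sub>R y) = B x x + 2 * t * B x y + t\<^sup>2 * B y y"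
      using form_simps symmetric[of y x] by (simp add: algebra_simps power2_eq_square)
    ultimately show "B x x + 2 * t * B x y + t\<^sup>2 * B y y \<le> 0" by simp
  qed
qed

text \<open>Reverse Cauchy--Schwarz: writing w = a e + w0 and u = b e + u0, Cauchy--Schwarz on the
negative semidefinite part gives |B w0 u0| < a b.\<close>

lemma timelike_future_inner_pos:
  assumes w: "w \<in> W" "B w w > 0" "B w e > 0" and u: "u \<in> future_cone B W e"
  shows "B w u > 0"
proof -
  have uW: "u \<in> W" and uu: "B u u \<ge> 0" and ue: "B u e > 0"
    using u by (auto simp: future_cone_def causal_cone_def)
  define a where "a = B w e"
  define b where "b = B u e"
  define w0 where "w0 = w - a *\<^sub>R e"
  define u0 where "u0 = u - b *\<^sub>R e"
  have w0: "w0 \<in> W" "B w0 e = 0" using orth_e_part[OF w(1)] by (simp_all add: w0_def a_def)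
  have u0: "u0 \<in> W" "B u0 e = 0" using orth_e_part[OF uW] by (simp_all add: u0_def b_def)
  have ww: "B w w = a * a + B w0 w0" using form_split_e[OF w0(2) w0(2), of a a] by (simp add: w0_def)
  have uu': "B u u = b * b + B u0 u0" using form_split_e[OF u0(2) u0(2), of b b] by (simp add: u0_def)
  have wu: "B w u = a * b + B w0 u0" using form_split_e[OF w0(2) u0(2), of a b] by (simp add: w0_def u0_def)
  have "(B w0 u0)\<^sup>2 \<le> B w0 w0 * B u0 u0" using cauchy_schwarz_orth_e w0 u0 by blast
  also have "B w0 w0 * B u0 u0 < (a * b)\<^sup>2"
  proof -
    have p: "0 \<le> - B w0 w0" "- B w0 w0 < a * a" using nonpos_on_orth_e w0 ww w(2) by auto
    have q: "0 \<le> - B u0 u0" "- B u0 u0 \<le> b * b" using nonpos_on_orth_e u0 uu' uu by auto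
    have "B w0 w0 * B u0 u0 = (- B w0 w0) * (- B u0 u0)" by simp
    also have "\<dots> \<le> (- B w0 w0) * (b * b)" using p q by (intro mult_left_mono) auto
    also have "\<dots> < (a * a) * (b * b)" using p ue by (intro mult_strict_right_mono) (auto simp: b_def)
    finally show ?thesis by (simp add: power2_eq_square algebra_simps)
  qed
  finally have "\<bar>B w0 u0\<bar> < a * b"
    using power2_less_imp_less[of "\<bar>B w0 u0\<bar>" "a * b"] w(3) ue by (simp add: a_def b_def)
  then show ?thesis using wu by linarith
qed

text \<open>Correct e by its projection onto the negative definite subspace Y.\<close>

lemma future_orthogonal_to_negative_definite:
  assumes D: "diag_basis B Y Yb" and YW: "Y \<subseteq> W" and neg: "\<forall>b\<in>Yb. B b b = -1"
  shows "\<exists>u\<in>future_cone B W e. \<forall>y\<in>Y. B y u = 0"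
proof -
  have fin: "finite Yb" and sp: "span Yb = Y" and orth: "\<forall>a\<in>Yb. \<forall>b\<in>Yb. a \<noteq> b \<longrightarrow> B a b = 0"
    using D by (auto simp: diag_basis_def)
  have YbW: "Yb \<subseteq> W" using sp span_superset YW by blast
  define u where "u = e + (\<Sum>b\<in>Yb. B e b *\<^sub>R b)"
  have ub: "B b u = 0" if b: "b \<in> Yb" for b
  proof -
    have "B u b = B e b + B e b * B b b"
      using bilinear_sum_orthogonal_left[OF bilinear fin orth b] form_simps by (simp add: u_def)
    then show ?thesis using neg b symmetric[of b u] by simp
  qed
  then have perp: "\<forall>y\<in>Y. B y u = 0" using bilinear_span_orthogonal_left[OF bilinear] sp by blast
  have "B e u = 1 + (\<Sum>b\<in>Yb. (B e b)\<^sup>2)"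
    using e_unit form_simps by (simp add: u_def bilinear_sum_right[OF bilinear] power2_eq_square)
  then have eu: "B e u \<ge> 1" by (simp add: sum_nonneg)
  have "B u u = B e u + B (\<Sum>b\<in>Yb. B e b *\<^sub>R b) u"
    by (metis form_simps(1) u_def)
  also have "B (\<Sum>b\<in>Yb. B e b *\<^sub>R b) u = 0"
    using ub by (simp add: bilinear_sum_left[OF bilinear])
  finally have uu: "B u u = B e u" by simp
  have "u \<in> W" unfolding u_def using e_in_W YbW
    by (intro subspace_add[OF subspace_W] subspace_sum[OF subspace_W] subspace_scale[OF subspace_W]) auto
  moreover have "u \<noteq> 0" using eu form_simps by auto
  ultimately have "u \<in> future_cone B W e"
    using uu eu symmetric[of u e] by (simp add: future_cone_def causal_cone_def)
  then show ?thesis using perp by blast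
qed

lemma exists_future_orthogonal:
  assumes Y: "subspace Y" "Y \<subseteq> W" and nonpos: "\<forall>y\<in>Y. B y y \<le> 0"
  shows "\<exists>u\<in>future_cone B W e. \<forall>y\<in>Y. B y u = 0"
proof -
  obtain Yb where D: "diag_basis B Y Yb" using diag_basis_exists[OF Y(1)] by blast
  have sp: "span Yb = Y" and ind: "independent Yb" and orth: "\<forall>a\<in>Yb. \<forall>b\<in>Yb. a \<noteq> b \<longrightarrow> B a b = 0"
    and vals: "\<forall>b\<in>Yb. B b b = 1 \<or> B b b = -1 \<or> B b b = 0"
    using D by (auto simp: diag_basis_def)
  have YbY: "Yb \<subseteq> Y" using sp span_superset by blast
  show ?thesis
  proof (cases "\<exists>n\<in>Yb. B n n = 0")
    case True
    then obtain n where n: "n \<in> Yb" "B n n = 0" by blast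
    have "\<forall>b\<in>Yb. B b n = 0" using orth n by metis
    then have perp: "\<forall>y\<in>Y. B y n = 0" using bilinear_span_orthogonal_left[OF bilinear] sp by blast
    have "n \<in> causal_cone B W"
      using n YbY Y(2) ind dependent_zero by (auto simp: causal_cone_def)
    moreover have "\<forall>y\<in>Y. B y (- n) = 0" using perp form_simps by simp
    ultimately show ?thesis using perp causal_cone_future_or_past by blast
  next
    case False
    then have "\<forall>b\<in>Yb. B b b = -1" using vals nonpos YbY by fastforce
    then show ?thesis using future_orthogonal_to_negative_definite[OF D Y(2)] by blast
  qed
qed

lemma timelike_imp_positive_on_future_cone:
  assumes Y: "subspace Y" "Y \<subseteq> W" and y: "y \<in> Y" "B y y > 0"
  shows "\<exists>z\<in>Y. \<forall>u\<in>future_cone B W e. B z u > 0"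
proof -
  have "y \<in> causal_cone B W" using y Y(2) form_simps by (auto simp: causal_cone_def)
  then obtain z where z: "z = y \<or> z = - y" "z \<in> future_cone B W e"
    using causal_cone_future_or_past by blast
  have "z \<in> Y" using z(1) y(1) Y(1) subspace_neg by blast
  moreover have "B z z > 0" using z(1) y(2) form_simps by auto
  ultimately show ?thesis
    using timelike_future_inner_pos z(2) Y(2) by (auto simp: future_cone_def)
qed

lemma
  assumes Y: "subspace Y" "Y \<subseteq> W"
  shows timelike_iff_positive_on_future_cone:
      "(\<exists>y\<in>Y. B y y > 0) \<longleftrightarrow> (\<exists>y\<in>Y. \<forall>u\<in>future_cone B W e. B y u > 0)"
    and timelike_iff_orth_disjoint_future_cone:
      "(\<exists>y\<in>Y. B y y > 0) \<longleftrightarrow> orth B Y \<inter> future_cone B W e = {}"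
proof -
  have pos_imp_disjoint: "orth B Y \<inter> future_cone B W e = {}"
    if "\<exists>y\<in>Y. \<forall>u\<in>future_cone B W e. B y u > 0"
    using that by (fastforce simp: orth_def)
  have disjoint_imp_timelike: "\<exists>y\<in>Y. B y y > 0" if "orth B Y \<inter> future_cone B W e = {}"
  proof (rule ccontr)
    assume "\<not> (\<exists>y\<in>Y. B y y > 0)"
    then obtain u where "u \<in> future_cone B W e" "\<forall>y\<in>Y. B y u = 0"
      using exists_future_orthogonal[OF Y] by force
    then show False using that by (auto simp: orth_def)
  qed
  show "(\<exists>y\<in>Y. B y y > 0) \<longleftrightarrow> (\<exists>y\<in>Y. \<forall>u\<in>future_cone B W e. B y u > 0)"
    using timelike_imp_positive_on_future_cone[OF Y] pos_imp_disjoint disjoint_imp_timelike by blast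
  show "(\<exists>y\<in>Y. B y y > 0) \<longleftrightarrow> orth B Y \<inter> future_cone B W e = {}"
    using timelike_imp_positive_on_future_cone[OF Y] pos_imp_disjoint disjoint_imp_timelike by blast
qed

end

context symmetric_bilinear_form
begin

lemma diag_basis_nondegenerate:
  assumes D: "diag_basis B W Wb" and nd: "\<forall>x\<in>W. (\<forall>y\<in>W. B x y = 0) \<longrightarrow> x = 0"
    and b: "b \<in> Wb"
  shows "B b b = 1 \<or> B b b = -1"
proof -
  have sp: "span Wb = W" and ind: "independent Wb" and orth: "\<forall>a\<in>Wb. \<forall>c\<in>Wb. a \<noteq> c \<longrightarrow> B a c = 0"
    using D by (auto simp: diag_basis_def)
  have "B b b \<noteq> 0"
  proof
    assume "B b b = 0"
    then have "\<forall>c\<in>Wb. B c b = 0" using orth b by metis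
    then have "\<forall>y\<in>W. B b y = 0"
      using bilinear_span_orthogonal_left[OF bilinear] sp symmetric by metis
    then have "b = 0" using nd b sp span_superset by blast
    then show False using b ind dependent_zero by blast
  qed
  then show ?thesis using D b by (auto simp: diag_basis_def)
qed

text \<open>The frame vector is the positive vector of a Sylvester basis; nondegeneracy rules out
isotropic basis vectors.\<close>

lemma lorentzian_frame_exists:
  assumes W: "subspace W" and nd: "\<forall>x\<in>W. (\<forall>y\<in>W. B x y = 0) \<longrightarrow> x = 0"
    and q: "q_plus B W = 1"
  shows "\<exists>e. lorentzian_frame B W e"
proof -
  obtain Wb where D: "diag_basis B W Wb" using diag_basis_exists[OF W] by blast
  have fin: "finite Wb" and sp: "span Wb = W" and orth: "\<forall>a\<in>Wb. \<forall>b\<in>Wb. a \<noteq> b \<longrightarrow> B a b = 0"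
    using D by (auto simp: diag_basis_def)
  obtain e where e: "{b\<in>Wb. B b b = 1} = {e}"
    using q q_plus_diag_basis[OF D] card_1_singletonE by metis
  then have eWb: "e \<in> Wb" and ee: "B e e = 1" by auto
  have others: "B b b = -1" if "b \<in> Wb" "b \<noteq> e" for b
    using diag_basis_nondegenerate[OF D nd that(1)] e that by blast
  have "B w w < 0" if w: "w \<in> W" "B w e = 0" "w \<noteq> 0" for w
  proof -
    obtain c where c: "w = (\<Sum>b\<in>Wb. c b *\<^sub>R b)" using w(1) sp span_finite[OF fin] by auto
    have ce: "c e = 0" using bilinear_sum_orthogonal_left[OF bilinear fin orth eWb] c w(2) ee by simp
    have "c b * c b * B b b = - (c b)\<^sup>2" if "b \<in> Wb" for b
      using that ce others by (cases "b = e") (auto simp: power2_eq_square)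
    then have "B w w = - (\<Sum>b\<in>Wb. (c b)\<^sup>2)"
      using bilinear_sum_orthogonal[OF bilinear fin orth] c by (simp add: sum_negf[symmetric])
    moreover have "\<exists>b\<in>Wb. c b \<noteq> 0" using c w(3) sum.neutral[of Wb "\<lambda>b. c b *\<^sub>R b"] by auto
    ultimately show ?thesis using fin
      by (metis (no_types, lifting) neg_less_0_iff_less sum_pos2 zero_le_power2 zero_less_power2)
  qed
  moreover have "e \<in> W" using eWb sp span_superset by blast
  ultimately have "lorentzian_frame B W e" using W ee by unfold_locales auto
  then show ?thesis ..
qed

end

section \<open>Splitting off a positive definite subspace\<close>

locale orthogonal_splitting = symmetric_bilinear_form +
  fixes H :: "'a::euclidean_space set"
  assumes nondegenerate: "\<forall>x. (\<forall>y. B x y = 0) \<longrightarrow> x = 0"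
    and subspace_H: "subspace H" and positive_H: "\<forall>x\<in>H. x \<noteq> 0 \<longrightarrow> B x x > 0"
begin

definition Hb :: "'a set" where "Hb = (SOME Bs. diag_basis B H Bs)"

definition proj_H :: "'a \<Rightarrow> 'a" where "proj_H v = (\<Sum>h\<in>Hb. B v h *\<^sub>R h)"

definition proj_orth :: "'a \<Rightarrow> 'a" where "proj_orth v = v - proj_H v"

lemma Hb_basis: "diag_basis B H Hb"
  unfolding Hb_def using diag_basis_exists[OF subspace_H] by (rule someI_ex)

lemma Hb_finite: "finite Hb" and span_Hb: "span Hb = H"
  and Hb_orth: "\<forall>a\<in>Hb. \<forall>b\<in>Hb. a \<noteq> b \<longrightarrow> B a b = 0"
  using Hb_basis by (auto simp: diag_basis_def)

lemma Hb_subset: "Hb \<subseteq> H"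
  using span_Hb span_superset by blast

lemma Hb_unit: "h \<in> Hb \<Longrightarrow> B h h = 1"
proof -
  assume h: "h \<in> Hb"
  then have "h \<noteq> 0" using Hb_basis dependent_zero by (auto simp: diag_basis_def)
  then have "B h h > 0" using positive_H Hb_subset h by blast
  then show ?thesis using Hb_basis h by (auto simp: diag_basis_def)
qed

lemma proj_H_in_H: "proj_H v \<in> H"
  unfolding proj_H_def using Hb_subset
  by (intro subspace_sum[OF subspace_H] subspace_scale[OF subspace_H]) auto

lemma in_orth_H_iff: "w \<in> orth B H \<longleftrightarrow> (\<forall>h\<in>Hb. B h w = 0)"
  using Hb_subset span_Hb bilinear_span_orthogonal_left[OF bilinear, of Hb w]
  by (auto simp: orth_def)

lemma proj_orth_in_orth: "proj_orth v \<in> orth B H"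
proof -
  have "B h (proj_H v) = B v h" if "h \<in> Hb" for h
    using bilinear_sum_orthogonal_left[OF bilinear Hb_finite Hb_orth that] Hb_unit[OF that]
      symmetric[of h "proj_H v"] by (simp add: proj_H_def)
  then have "B h (proj_orth v) = 0" if "h \<in> Hb" for h
    using that form_simps(6) symmetric[of h v] by (simp add: proj_orth_def)
  then show ?thesis unfolding in_orth_H_iff by blast
qed

lemma H_inter_orth: "H \<inter> orth B H = {0}"
proof -
  have "x = 0" if "x \<in> H" "x \<in> orth B H" for x
    using that positive_H by (force simp: orth_def)
  then show ?thesis using subspace_0[OF subspace_H] subspace_0[OF subspace_orth[OF bilinear]] by blast
qed

lemma form_proj_orth: "w \<in> orth B H \<Longrightarrow> B z w = B (proj_orth z) w"
  using proj_H_in_H form_simps by (simp add: proj_orth_def orth_def)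

lemma orth_H_nondegenerate:
  assumes x: "x \<in> orth B H" and "\<forall>y\<in>orth B H. B x y = 0"
  shows "x = 0"
proof -
  have "B x y = 0" for y
  proof -
    have "B x y = B (proj_orth y) x" using form_proj_orth[OF x, of y] symmetric[of x y] by simp
    also have "\<dots> = B x (proj_orth y)" by (rule symmetric)
    finally show ?thesis using assms(2) proj_orth_in_orth by simp
  qed
  then show ?thesis using nondegenerate by blast
qed

lemma set_plus_H_orth: "set_plus H (orth B H) = UNIV"
proof -
  have "v = proj_H v + proj_orth v" for v by (simp add: proj_orth_def)
  then show ?thesis using proj_H_in_H proj_orth_in_orth unfolding set_plus_def by blast
qed

lemma H_orthogonal_to_orth: "\<forall>x\<in>H. \<forall>y\<in>orth B H. B x y = 0"
  by (simp add: orth_def)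

lemma q_plus_UNIV: "q_plus B UNIV = dim H + q_plus B (orth B H)"
  using q_plus_orthogonal_sum[OF subspace_H subspace_orth[OF bilinear] H_inter_orth H_orthogonal_to_orth]
    q_plus_positive_definite[OF subspace_H positive_H] set_plus_H_orth by simp

lemma q_minus_UNIV: "q_minus B UNIV = q_minus B (orth B H)"
  using q_minus_orthogonal_sum[OF subspace_H subspace_orth[OF bilinear] H_inter_orth H_orthogonal_to_orth]
    q_minus_positive_definite[OF subspace_H positive_H] set_plus_H_orth by simp

lemma span_H: "span H = H"
  using subspace_H by (simp add: span_eq_iff)

lemma set_plus_H_line: "set_plus H {t *\<^sub>R z | t. True} = span (insert z H)"
proof -
  have "span (insert z H) = {x. \<exists>t. x - t *\<^sub>R z \<in> H}"
    using span_breakdown_eq[of _ z H] span_H by auto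
  also have "\<dots> = set_plus H {t *\<^sub>R z | t. True}"
  proof (intro equalityI subsetI)
    fix x assume "x \<in> {x. \<exists>t. x - t *\<^sub>R z \<in> H}"
    then obtain t where "x - t *\<^sub>R z \<in> H" by blast
    then show "x \<in> set_plus H {t *\<^sub>R z | t. True}"
      unfolding set_plus_def by (intro CollectI exI[of _ "x - t *\<^sub>R z"] exI[of _ "t *\<^sub>R z"]) auto
  next
    fix x assume "x \<in> set_plus H {t *\<^sub>R z | t. True}"
    then obtain h t where "x = h + t *\<^sub>R z" "h \<in> H" unfolding set_plus_def by blast
    then show "x \<in> {x. \<exists>t. x - t *\<^sub>R z \<in> H}" by (intro CollectI exI[of _ t]) simp
  qed
  finally show ?thesis ..
qed

lemma span_insert_proj_orth: "span (insert (proj_orth z) H) = span (insert z H)"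
proof -
  have "z - 1 *\<^sub>R proj_orth z \<in> span H" "proj_orth z - 1 *\<^sub>R z \<in> span H"
    using proj_H_in_H subspace_neg[OF subspace_H] by (simp_all add: proj_orth_def span_H)
  then have "z \<in> span (insert (proj_orth z) H)" "proj_orth z \<in> span (insert z H)"
    using span_breakdown_eq by blast+
  then show ?thesis
    using span_minimal[OF _ subspace_span, of "insert z H" "insert (proj_orth z) H"]
      span_minimal[OF _ subspace_span, of "insert (proj_orth z) H" "insert z H"]
      span_superset[of "insert z H"] span_superset[of "insert (proj_orth z) H"]
    by (auto simp: span_span)
qed

lemma positive_plane_insert_orth_iff:
  assumes w: "w \<in> orth B H"
  shows "positive_plane B (dim H + 1) (span (insert w H)) \<longleftrightarrow> B w w > 0"
proof
  assume pos: "positive_plane B (dim H + 1) (span (insert w H))"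
  then have "w \<notin> H"
    using dim_insert[of w H] span_H by (auto simp: positive_plane_def dim_span split: if_splits)
  then have "w \<noteq> 0" using subspace_0[OF subspace_H] by blast
  then show "B w w > 0" using pos span_base[of w] by (auto simp: positive_plane_def)
next
  assume ww: "B w w > 0"
  have "w \<notin> H"
  proof
    assume "w \<in> H"
    then have "w = 0" using w H_inter_orth by blast
    then show False using ww form_simps by simp
  qed
  then have "dim (span (insert w H)) = dim H + 1"
    using dim_insert[of w H] span_H by (simp add: dim_span)
  moreover have "B x x > 0" if x: "x \<in> span (insert w H)" "x \<noteq> 0" for x
  proof -
    obtain t where "x - t *\<^sub>R w \<in> H"
      using x(1) span_breakdown_eq[of x w H] span_H by auto
    then obtain h where h: "h \<in> H" "x = h + t *\<^sub>R w" by (metis diff_add_cancel)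
    then have "B h w = 0" "B w h = 0" using w symmetric[of w h] by (simp_all add: orth_def)
    then have xx: "B x x = B h h + t * t * B w w" using h(2) form_simps(1-4) by simp
    show ?thesis
    proof (cases "t = 0")
      case True
      then show ?thesis using positive_H h x(2) by auto
    next
      case False
      then have "t * t * B w w > 0" using ww by (auto simp: zero_less_mult_iff linorder_neq_iff)
      moreover have "B h h \<ge> 0" using positive_H h(1) form_simps by (cases "h = 0") (auto intro: less_imp_le)
      ultimately show ?thesis using xx by simp
    qed
  qed
  ultimately show "positive_plane B (dim H + 1) (span (insert w H))" by (simp add: positive_plane_def)
qed

lemma extendable_iff_timelike_proj:
  "extendable B (dim H + 1) Z H \<longleftrightarrow> (\<exists>z\<in>Z. B (proj_orth z) (proj_orth z) > 0)"
proof -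
  have "positive_plane B (dim H + 1) (span (insert z H)) \<longleftrightarrow> B (proj_orth z) (proj_orth z) > 0" for z
    using positive_plane_insert_orth_iff[OF proj_orth_in_orth, of z] span_insert_proj_orth[of z] by simp
  then show ?thesis unfolding extendable_def set_plus_H_line by blast
qed

lemma set_plus_H_proj_orth:
  assumes Z: "subspace Z"
  shows "set_plus H Z = set_plus H (proj_orth ` Z)"
proof -
  have "h + z = (h + proj_H z) + proj_orth z" "h + proj_orth z = (h - proj_H z) + z" for h z
    by (simp_all add: proj_orth_def)
  moreover have "h + proj_H z \<in> H" "h - proj_H z \<in> H" if "h \<in> H" for h z
    using that proj_H_in_H subspace_H by (simp_all add: subspace_add subspace_diff)
  ultimately show ?thesis unfolding set_plus_def by blast
qed

lemma set_plus_H_inter_orth: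
  assumes Z: "subspace Z"
  shows "set_plus H Z \<inter> orth B H = proj_orth ` Z"
proof
  show "proj_orth ` Z \<subseteq> set_plus H Z \<inter> orth B H"
    using set_plus_H_proj_orth[OF Z] proj_orth_in_orth subspace_0[OF subspace_H]
    unfolding set_plus_def by force
  show "set_plus H Z \<inter> orth B H \<subseteq> proj_orth ` Z"
  proof
    fix x assume x: "x \<in> set_plus H Z \<inter> orth B H"
    then obtain h z where v: "x = h + proj_orth z" "h \<in> H" "z \<in> Z"
      using set_plus_H_proj_orth[OF Z] unfolding set_plus_def by blast
    then have "h \<in> orth B H"
      using x proj_orth_in_orth subspace_orth[OF bilinear] by (metis IntD2 add_diff_cancel_right' subspace_diff)
    then have "h = 0" using H_inter_orth v by auto
    then show "x \<in> proj_orth ` Z" using v by auto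
  qed
qed

lemma subspace_proj_orth_image:
  assumes Z: "subspace Z"
  shows "subspace (proj_orth ` Z)"
proof -
  have "subspace (set_plus H Z)" unfolding set_plus_def using subspace_sums[OF subspace_H Z] .
  then have "subspace (set_plus H Z \<inter> orth B H)" using subspace_orth[OF bilinear] by (rule subspace_inter)
  then show ?thesis by (simp only: set_plus_H_inter_orth[OF Z])
qed

lemma q_plus_set_plus_H:
  assumes Z: "subspace Z"
  shows "q_plus B (set_plus H Z) = dim H + q_plus B (proj_orth ` Z)"
proof -
  have "proj_orth ` Z \<subseteq> orth B H" using proj_orth_in_orth by blast
  then have "H \<inter> proj_orth ` Z = {0}" and "\<forall>x\<in>H. \<forall>y\<in>proj_orth ` Z. B x y = 0"
    using H_inter_orth subspace_0[OF subspace_H] subspace_0[OF subspace_proj_orth_image[OF Z]]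
    by (auto simp: orth_def)
  then show ?thesis
    using q_plus_orthogonal_sum[OF subspace_H subspace_proj_orth_image[OF Z]]
      q_plus_positive_definite[OF subspace_H positive_H] set_plus_H_proj_orth[OF Z] by simp
qed

lemma extendable_equivalences:
  assumes Z: "subspace Z" and q1: "q_plus B (orth B H) = 1"
    and frame: "lorentzian_frame B (orth B H) e"
  shows "(extendable B (dim H + 1) Z H \<longleftrightarrow> q_plus B (set_plus H Z) = dim H + 1)
       \<and> (extendable B (dim H + 1) Z H \<longleftrightarrow> 1 \<le> q_plus B (set_plus H Z \<inter> orth B H))
       \<and> (extendable B (dim H + 1) Z H \<longleftrightarrow> (\<exists>z\<in>Z. \<forall>u\<in>future_cone B (orth B H) e. B z u > 0))
       \<and> (extendable B (dim H + 1) Z H \<longleftrightarrow> orth B Z \<inter> future_cone B (orth B H) e = {})"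
proof -
  interpret lorentzian_frame B "orth B H" e by (rule frame)
  let ?Y = "proj_orth ` Z" and ?F = "future_cone B (orth B H) e"
  have Y: "subspace ?Y" "?Y \<subseteq> orth B H"
    using subspace_proj_orth_image[OF Z] proj_orth_in_orth by auto
  have F: "?F \<subseteq> orth B H" by (auto simp: future_cone_def causal_cone_def)
  have ext: "extendable B (dim H + 1) Z H \<longleftrightarrow> (\<exists>y\<in>?Y. B y y > 0)"
    using extendable_iff_timelike_proj by simp
  have "q_plus B ?Y \<le> 1" using q_plus_mono[OF Y(1) subspace_W Y(2)] q1 by simp
  then have ii: "q_plus B (set_plus H Z) = dim H + 1 \<longleftrightarrow> (\<exists>y\<in>?Y. B y y > 0)"
    using q_plus_set_plus_H[OF Z] q_plus_ge_1_iff[OF Y(1)] by auto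
  have iii: "1 \<le> q_plus B (set_plus H Z \<inter> orth B H) \<longleftrightarrow> (\<exists>y\<in>?Y. B y y > 0)"
    using q_plus_ge_1_iff[OF Y(1)] set_plus_H_inter_orth[OF Z] by simp
  have "B (proj_orth z) u = B z u" if "u \<in> ?F" for z u using that F form_proj_orth by (metis subsetD)
  then have iv: "(\<exists>z\<in>Z. \<forall>u\<in>?F. B z u > 0) \<longleftrightarrow> (\<exists>y\<in>?Y. \<forall>u\<in>?F. B y u > 0)"
    and v: "orth B Z \<inter> ?F = orth B ?Y \<inter> ?F"
    by (auto simp: orth_def)
  show ?thesis
    using ext ii iii iv v timelike_iff_positive_on_future_cone[OF Y]
      timelike_iff_orth_disjoint_future_cone[OF Y] by argo
qed

end

theorem lemma2:
  fixes B :: "'a::euclidean_space \<Rightarrow> 'a \<Rightarrow> real"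
    and k l :: nat and Z H :: "'a set"
  assumes sig: "has_signature B k l"
    and k2: "k \<ge> 2" and l2: "l \<ge> 2"
    and Z: "subspace Z" and qZ: "q_plus B Z \<ge> 1"
    and H: "positive_plane B (k - 1) H"
  shows "minkowski_subspace B l (orth B H)
    \<and> card (components (causal_cone B (orth B H))) = 2
    \<and> (\<forall>C \<in> components (causal_cone B (orth B H)).
         (extendable B k Z H \<longleftrightarrow> q_plus B (set_plus H Z) = k)
       \<and> (extendable B k Z H \<longleftrightarrow> q_plus B (set_plus H Z \<inter> orth B H) \<ge> 1)
       \<and> (extendable B k Z H \<longleftrightarrow> (\<exists>z\<in>Z. \<forall>u\<in>C. B z u > 0))
       \<and> (extendable B k Z H \<longleftrightarrow> orth B Z \<inter> C = {}))"
proof -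
  have dim_H: "dim H = k - 1" using H by (simp add: positive_plane_def)
  interpret orthogonal_splitting B H
    using sig H by unfold_locales (auto simp: has_signature_def pseudo_euclidean_form_def positive_plane_def)
  have k: "k = dim H + 1" using dim_H k2 by simp
  have q1: "q_plus B (orth B H) = 1" using sig q_plus_UNIV k by (simp add: has_signature_def)
  have "minkowski_subspace B l (orth B H)"
    using sig subspace_orth[OF bilinear] orth_H_nondegenerate q1 q_minus_UNIV
    by (auto simp: minkowski_subspace_def has_signature_def)
  moreover obtain e where frame: "lorentzian_frame B (orth B H) e"
    using lorentzian_frame_exists[OF subspace_orth[OF bilinear] _ q1] orth_H_nondegenerate by blast
  then interpret lorentzian_frame B "orth B H" e .
  note equivalences = extendable_equivalences[OF Z q1, unfolded k[symmetric]]
  ultimately show ?thesis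
    using components_causal_cone future_cone_neq_past
      equivalences[OF frame] equivalences[OF lorentzian_frame_uminus] by auto
qed

end
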